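(* Let $p>3$ be a prime and for $1\le k\le p-1$ define $$G(p,k)=\frac{p^2\binom{2p}{p}\binom{2p+2k}{p+k}\binom{2p-2k}{p-k}\binom{p+k}{p}}{2^{8p-2k-4}(2p+2k-1)\binom{2k}{k}}.$$ Then $$G\Big(p,\frac{p+1}{2}\Big)\equiv(-1)^{(p-1)/2}p\left(1-3pq_p(2)+6p^2q_p(2)^2\right)\pmod{p^4}.$$
   Context: $q_p(2)=(2^{p-1}-1)/p$ is the Fermat quotient. Congruences between rationals modulo $p^m$ mean the difference is $p^m$ times a rational with denominator prime to $p$. *)

theory Defs
  imports Complex_Main "HOL-Computational_Algebra.Primes"
begin

definition fermat_quot2 :: "nat \<Rightarrow> rat" where
  "fermat_quot2 p = (2 ^ (p - 1) - 1) / of_nat p"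

definition rat_cong :: "rat \<Rightarrow> rat \<Rightarrow> nat \<Rightarrow> nat \<Rightarrow> bool" where
  "rat_cong a b p m \<longleftrightarrow>
     (\<exists>r::rat. a - b = of_nat (p ^ m) * r \<and> \<not> int p dvd snd (quotient_of r))"

definition G :: "nat \<Rightarrow> nat \<Rightarrow> rat" where
  "G p k = (of_nat (p^2 * ((2*p) choose p) * ((2*p + 2*k) choose (p + k))
              * ((2*p - 2*k) choose (p - k)) * ((p + k) choose p)))
           / (2 ^ (8*p - 2*k - 4) * of_nat (2*p + 2*k - 1) * of_nat ((2*k) choose k))"

end

theory Submission
  imports Defs "HOL-Number_Theory.Number_Theory"
begin

(*
  Write p = 2n + 1 and t = 2^(p-1) - 1 = p q_p(2).  Each binomial coefficient occurring in
  G(p, n+1) is a generalised binomial coefficient (x + m choose m) = prod_{i<=m} (1 + x/i) with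
  p | x, and modulo p^3 it equals 1 + x H_m + x^2 (H_m^2 - H2_m)/2, where H and H2 are the
  harmonic sums of 1/i and 1/i^2.  For m = p - 1 Wolstenholme's congruences H_(p-1) = 0 mod p^2
  and H2_(p-1) = 0 mod p give C(2p-1, p-1) = C(3p-1, p-1) = 1 mod p^3; for m = n one still has
  H2_n = 0 mod p.  Since (-p + n choose n) = 4^n (-1/2 choose n), comparing the two expansions
  yields Lehmer's congruence p H_n = -2t + t^2 mod p^3, hence Morley's congruence
  (-1)^n C(2n, n) = (1 + t)^2 and C(3n+1, n) = 1 - 2t + 3t^2 mod p^3.  Substituting into
  G(p, n+1) = (-1)^n p C(2p-1, p-1)^2 C(3p-1, p-1) C(2n, n) / (C(3n+1, n) 4^(7n)) and expanding
  (1 + t)^2 / ((1 - 2t + 3t^2) (1 + t)^7) to second order in t gives the claim.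
*)

section \<open>Rationals without p in the denominator\<close>

definition p_integral :: "nat \<Rightarrow> rat \<Rightarrow> bool" where
  "p_integral p x \<longleftrightarrow> (\<exists>a b. x = of_int a / of_int b \<and> \<not> int p dvd b)"

definition p_multiple :: "nat \<Rightarrow> nat \<Rightarrow> rat \<Rightarrow> bool" where
  "p_multiple p k x \<longleftrightarrow> (\<exists>y. p_integral p y \<and> x = of_nat p ^ k * y)"

locale prime_modulus =
  fixes p :: nat
  assumes prime: "prime p"
begin

lemma not_dvd_mult: "\<not> int p dvd a \<Longrightarrow> \<not> int p dvd b \<Longrightarrow> \<not> int p dvd a * b"
  using prime by (simp add: prime_dvd_mult_iff)

lemma not_dvd_less: "0 < i \<Longrightarrow> i < p \<Longrightarrow> \<not> p dvd i"
  by (auto dest: dvd_imp_le)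

lemma p_integral_of_int [simp]: "p_integral p (of_int a)"
  unfolding p_integral_def using prime
  by (intro exI[of _ a] exI[of _ 1]) (auto simp: prime_gt_1_nat)

lemma p_integral_of_nat [simp]: "p_integral p (of_nat a)"
  using p_integral_of_int[of "int a"] by simp

lemma p_integral_numeral [simp]: "p_integral p (numeral k)"
  using p_integral_of_nat[of "numeral k"] by simp

lemma p_integral_0 [simp]: "p_integral p 0" and p_integral_1 [simp]: "p_integral p 1"
  using p_integral_of_int[of 0] p_integral_of_int[of 1] by auto

lemma p_integral_divide_int:
  assumes "p_integral p x" "\<not> int p dvd b"
  shows "p_integral p (x / of_int b)"
proof -
  obtain a c where "x = of_int a / of_int c" "\<not> int p dvd c"
    using assms(1) unfolding p_integral_def by blast
  then have "x / of_int b = of_int a / of_int (c * b)" "\<not> int p dvd c * b"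
    using assms(2) not_dvd_mult by auto
  then show ?thesis unfolding p_integral_def by blast
qed

lemma p_integral_mult [intro]:
  assumes "p_integral p x" "p_integral p y"
  shows "p_integral p (x * y)"
proof -
  obtain a b c d where x: "x = of_int a / of_int b" "\<not> int p dvd b"
    and y: "y = of_int c / of_int d" "\<not> int p dvd d"
    using assms unfolding p_integral_def by blast
  then have "x * y = of_int (a * c) / of_int (b * d)" by simp
  then show ?thesis
    using x(2) y(2) not_dvd_mult unfolding p_integral_def by blast
qed

lemma p_integral_add [intro]:
  assumes "p_integral p x" "p_integral p y"
  shows "p_integral p (x + y)"
proof -
  obtain a b c d where x: "x = of_int a / of_int b" "\<not> int p dvd b"
    and y: "y = of_int c / of_int d" "\<not> int p dvd d"
    using assms unfolding p_integral_def by blast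
  have "b \<noteq> 0" "d \<noteq> 0" using x(2) y(2) by auto
  then have "x + y = of_int (a * d + c * b) / of_int (b * d)"
    using x y by (simp add: field_simps)
  then show ?thesis
    using x(2) y(2) not_dvd_mult unfolding p_integral_def by blast
qed

lemma p_integral_uminus [intro]: "p_integral p x \<Longrightarrow> p_integral p (- x)"
  using p_integral_mult[OF p_integral_of_int[of "-1"], of x] by simp

lemma p_integral_neg_numeral [simp]: "p_integral p (- numeral k)"
  and p_integral_neg_1 [simp]: "p_integral p (- 1)"
  by (rule p_integral_uminus, simp)+

lemma p_integral_diff [intro]: "p_integral p x \<Longrightarrow> p_integral p y \<Longrightarrow> p_integral p (x - y)"
  using p_integral_add[of x "- y"] by auto

lemma p_integral_power [intro]: "p_integral p x \<Longrightarrow> p_integral p (x ^ m)"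
  by (induction m) auto

lemma p_integral_sum [intro]: "(\<And>i. i \<in> A \<Longrightarrow> p_integral p (f i)) \<Longrightarrow> p_integral p (sum f A)"
  by (induction A rule: infinite_finite_induct) auto

lemma p_integral_divide_nat: "p_integral p x \<Longrightarrow> \<not> p dvd b \<Longrightarrow> p_integral p (x / of_nat b)"
  using p_integral_divide_int[of x "int b"] by simp

lemma p_integral_divide_less: "p_integral p x \<Longrightarrow> 0 < b \<Longrightarrow> b < p \<Longrightarrow> p_integral p (x / of_nat b)"
  by (rule p_integral_divide_nat) (auto dest: dvd_imp_le)

lemma p_multiple_imp_p_integral: "p_multiple p k x \<Longrightarrow> p_integral p x"
  unfolding p_multiple_def by (auto intro!: p_integral_mult p_integral_power)

lemma p_multiple_0_iff: "p_multiple p 0 x \<longleftrightarrow> p_integral p x"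
  unfolding p_multiple_def by auto

lemma p_multiple_zero [simp]: "p_multiple p k 0"
  unfolding p_multiple_def by (intro exI[of _ 0]) auto

lemma p_multiple_of_nat_p: "p_multiple p 1 (of_nat p)"
  unfolding p_multiple_def by (intro exI[of _ 1]) auto

lemma p_multiple_power_mult_iff: "p_multiple p k (of_nat p ^ k * y) \<longleftrightarrow> p_integral p y"
  using prime unfolding p_multiple_def by (auto simp: prime_gt_0_nat)

lemma p_multiple_add [intro]: "p_multiple p k x \<Longrightarrow> p_multiple p k y \<Longrightarrow> p_multiple p k (x + y)"
  unfolding p_multiple_def by (metis distrib_left p_integral_add)

lemma p_multiple_mono: "j \<le> k \<Longrightarrow> p_multiple p k x \<Longrightarrow> p_multiple p j x"
proof -
  assume "j \<le> k" "p_multiple p k x"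
  then obtain y where "p_integral p y" "x = of_nat p ^ (j + (k - j)) * y"
    unfolding p_multiple_def by auto
  then have "p_integral p y" "x = of_nat p ^ j * (of_nat p ^ (k - j) * y)"
    by (simp_all only: power_add mult.assoc)
  then show ?thesis
    unfolding p_multiple_def
    by (intro exI[of _ "of_nat p ^ (k - j) * y"] conjI p_integral_mult p_integral_power) simp_all
qed

lemma p_multiple_mult:
  assumes "p_multiple p i x" "p_multiple p j y" "k \<le> i + j"
  shows "p_multiple p k (x * y)"
proof -
  obtain a b where "p_integral p a" "x = of_nat p ^ i * a" "p_integral p b" "y = of_nat p ^ j * b"
    using assms unfolding p_multiple_def by auto
  then have "p_multiple p (i + j) (x * y)"
    unfolding p_multiple_def by (intro exI[of _ "a * b"]) (auto simp: power_add)
  then show ?thesis using assms(3) by (rule p_multiple_mono[rotated])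
qed

lemma p_multiple_mult_left [intro]: "p_integral p c \<Longrightarrow> p_multiple p k x \<Longrightarrow> p_multiple p k (c * x)"
  using p_multiple_mult[of 0 c k x k] by (simp add: p_multiple_0_iff)

lemma p_multiple_mult_right [intro]: "p_multiple p k x \<Longrightarrow> p_integral p c \<Longrightarrow> p_multiple p k (x * c)"
  using p_multiple_mult_left[of c k x] by (simp add: mult.commute)

lemma p_multiple_uminus [intro]: "p_multiple p k x \<Longrightarrow> p_multiple p k (- x)"
  using p_multiple_mult_left[OF p_integral_of_int[of "-1"], of k x] by simp

lemma p_multiple_diff [intro]: "p_multiple p k x \<Longrightarrow> p_multiple p k y \<Longrightarrow> p_multiple p k (x - y)"
  using p_multiple_add[of k x "- y"] by auto

lemma p_multiple_diff_trans: "p_multiple p k (x - y) \<Longrightarrow> p_multiple p k (y - z) \<Longrightarrow> p_multiple p k (x - z)"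
  using p_multiple_add[of k "x - y" "y - z"] by simp

lemma p_integral_if_p_multiple_diff: "p_multiple p k (x - y) \<Longrightarrow> p_integral p y \<Longrightarrow> p_integral p x"
  using p_integral_add[OF p_multiple_imp_p_integral] by fastforce

lemma p_multiple_sum [intro]: "(\<And>i. i \<in> A \<Longrightarrow> p_multiple p k (f i)) \<Longrightarrow> p_multiple p k (sum f A)"
  by (induction A rule: infinite_finite_induct) auto

lemma p_multiple_power: "p_multiple p k x \<Longrightarrow> j \<le> k * m \<Longrightarrow> p_multiple p j (x ^ m)"
proof (induction m arbitrary: j)
  case (Suc m)
  then show ?case using p_multiple_mult[of k x "k * m" "x ^ m" j] by simp
qed (simp add: p_multiple_0_iff)

lemma p_multiple_mult_diff:
  assumes "p_multiple p k (a - b)" "p_multiple p k (c - d)" "p_integral p a" "p_integral p d"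
  shows "p_multiple p k (a * c - b * d)"
proof -
  have "a * c - b * d = a * (c - d) + (a - b) * d" by (simp add: algebra_simps)
  then show ?thesis using assms by (simp add: p_multiple_add p_multiple_mult_left p_multiple_mult_right)
qed

lemma p_integral_inverse:
  assumes "p_multiple p 1 (y - 1)"
  shows "y \<noteq> 0" and "p_integral p (1 / y)"
proof -
  obtain a b where ab: "y - 1 = of_nat p * (of_int a / of_int b)" "\<not> int p dvd b"
    using assms unfolding p_multiple_def p_integral_def by auto
  have "b \<noteq> 0" using ab(2) by auto
  then have y: "y = of_int (b + int p * a) / of_int b"
    using ab(1) by (simp add: field_simps)
  have num: "\<not> int p dvd b + int p * a"
    using ab(2) by (simp add: dvd_add_times_triv_right_iff mult.commute)
  then have "b + int p * a \<noteq> 0" by auto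
  then show "y \<noteq> 0" using y \<open>b \<noteq> 0\<close> by (simp del: of_int_add of_int_mult)
  show "p_integral p (1 / y)"
    using y num unfolding p_integral_def by (intro exI[of _ b] exI[of _ "b + int p * a"]) simp
qed

lemma rat_cong_if_p_multiple:
  assumes "p_multiple p m (a - b)"
  shows "rat_cong a b p m"
proof -
  obtain r where r: "p_integral p r" "a - b = of_nat p ^ m * r"
    using assms unfolding p_multiple_def by auto
  obtain x y where xy: "r = of_int x / of_int y" "\<not> int p dvd y"
    using r(1) unfolding p_integral_def by auto
  obtain n d where q: "quotient_of r = (n, d)" by (cases "quotient_of r")
  have "y \<noteq> 0" "d > 0" using xy(2) quotient_of_denom_pos[OF q] by auto
  then have "n * y = x * d"
    using xy(1) quotient_of_div[OF q] by (simp add: field_simps flip: of_int_mult of_int_eq_iff)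
  then have "d dvd y"
    using quotient_of_coprime[OF q] by (metis coprime_commute coprime_dvd_mult_right_iff dvd_triv_right)
  then have "\<not> int p dvd d" using xy(2) dvd_trans by blast
  then show ?thesis unfolding rat_cong_def using r(2) q by (intro exI[of _ r]) simp
qed

lemma p_multiple_inverse_square_diff:
  fixes a b :: int
  assumes "\<not> int p dvd a" "\<not> int p dvd b" "int p dvd a - b"
  shows "p_multiple p 1 (1 / of_int a ^ 2 - 1 / of_int b ^ 2)"
proof -
  obtain c where c: "b - a = int p * c"
    using assms(3) by (metis dvd_def dvd_diff_commute)
  have "a \<noteq> 0" "b \<noteq> 0" using assms(1,2) by auto
  then have "1 / of_int a ^ 2 - 1 / of_int b ^ 2
      = (of_int ((b - a) * (b + a)) / (of_int (a ^ 2 * b ^ 2) :: rat))"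
    by (simp add: field_simps power2_eq_square)
  also have "\<dots> = of_nat p * (of_int (c * (b + a)) / of_int (a ^ 2 * b ^ 2))"
    unfolding c by simp
  also have "\<not> int p dvd a ^ 2 * b ^ 2"
    using assms(1,2) not_dvd_mult by (simp add: power2_eq_square)
  then have "p_multiple p 1 (of_nat p * (of_int (c * (b + a)) / of_int (a ^ 2 * b ^ 2)))"
    by (intro p_multiple_mult_right p_multiple_of_nat_p p_integral_divide_int p_integral_of_int)
  finally show ?thesis .
qed

end

locale prime_gt_3 = prime_modulus +
  assumes gt_3: "3 < p"
begin

lemma odd_p: "odd p"
  using prime gt_3 prime_odd_nat by auto

lemma not_dvd_2: "\<not> int p dvd 2"
  using gt_3 by (auto dest: zdvd_imp_le)

lemma coprime_2_p: "coprime 2 (int p)"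
  using odd_p by simp

lemma p_integral_half: "p_integral p x \<Longrightarrow> p_integral p (x / 2)"
  using p_integral_divide_int[OF _ not_dvd_2] by simp

lemma p_multiple_half: "p_multiple p k x \<Longrightarrow> p_multiple p k (x / 2)"
  using p_multiple_mult_right[OF _ p_integral_half[OF p_integral_1]] by simp

end

section \<open>Harmonic sums\<close>

definition harmonic :: "nat \<Rightarrow> rat" where
  "harmonic m = (\<Sum>i=1..m. 1 / of_nat i)"

definition harmonic_sq :: "nat \<Rightarrow> rat" where
  "harmonic_sq m = (\<Sum>i=1..m. 1 / of_nat i ^ 2)"

lemma sum_double_interval_reflect:
  fixes f :: "nat \<Rightarrow> 'a::comm_monoid_add"
  shows "(\<Sum>i=1..2*n. f i) = (\<Sum>i=1..n. f i + f (2*n+1-i))"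
proof -
  have "(\<Sum>i=1..2*n. f i) = (\<Sum>i=1..n. f i) + (\<Sum>i=n+1..n+n. f i)"
    using sum.ub_add_nat[of 1 n f n] by (simp add: mult_2)
  also have "(\<Sum>i=n+1..n+n. f i) = (\<Sum>i=1..n. f (2*n+1-i))"
    by (rule sum.reindex_bij_witness[where i="\<lambda>i. 2*n+1-i" and j="\<lambda>i. 2*n+1-i"]) auto
  finally show ?thesis by (simp add: sum.distrib)
qed

context prime_modulus
begin

lemma p_integral_harmonic: "m < p \<Longrightarrow> p_integral p (harmonic m)"
  unfolding harmonic_def by (intro p_integral_sum p_integral_divide_less) auto

lemma p_integral_harmonic_sq: "m < p \<Longrightarrow> p_integral p (harmonic_sq m)"
  unfolding harmonic_sq_def
proof (intro p_integral_sum)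
  fix i assume "m < p" "i \<in> {1..m}"
  then have "\<not> p dvd i ^ 2"
    using not_dvd_less[of i] prime_dvd_power[OF prime, of i 2] by auto
  then show "p_integral p (1 / of_nat i ^ 2)"
    using p_integral_divide_nat[OF p_integral_1] by (metis of_nat_power)
qed

end

context prime_gt_3
begin

(* m \<mapsto> 2m mod p permutes the units mod p, so H2_(p-1) = H2_(p-1)/4 mod p. *)
lemma harmonic_sq_full_cong: "p_multiple p 1 (harmonic_sq (p - 1))"
proof -
  let ?S = "harmonic_sq (p - 1)"
  let ?R = "{1..<int p}"
  have reindex: "(\<Sum>m\<in>?R. f m) = (\<Sum>i=1..p-1. f (int i))" for f :: "int \<Rightarrow> rat"
  proof -
    have "?R = int ` {1..<p}" by (simp add: image_int_atLeastLessThan)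
    moreover have "{1..<p} = {1..p-1}" using gt_3 by auto
    ultimately show ?thesis by (simp add: sum.reindex)
  qed
  have "(\<Sum>m\<in>?R. 1 / of_int (2 * m mod int p) ^ 2) = (\<Sum>m\<in>?R. 1 / rat_of_int m ^ 2)"
    using sum.reindex_bij_betw[OF bij_betw_int_remainders_mult[OF coprime_2_p]] .
  also have "\<dots> = ?S"
    unfolding reindex harmonic_sq_def by simp
  finally have doubled: "(\<Sum>m\<in>?R. 1 / of_int (2 * m mod int p) ^ 2) = ?S" .
  have halved: "(\<Sum>m\<in>?R. 1 / of_int (2 * m) ^ 2) = ?S / 4"
    unfolding reindex harmonic_sq_def by (simp add: sum_divide_distrib power_mult_distrib mult.commute)
  have "p_multiple p 1 (\<Sum>m\<in>?R. 1 / of_int (2 * m mod int p) ^ 2 - 1 / of_int (2 * m) ^ 2)"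
  proof (intro p_multiple_sum p_multiple_inverse_square_diff)
    fix m assume m: "m \<in> ?R"
    then have "0 < 2 * m mod int p" "2 * m mod int p < int p"
      using bij_betw_apply[OF bij_betw_int_remainders_mult[OF coprime_2_p] m] by auto
    then show "\<not> int p dvd 2 * m mod int p"
      using zdvd_imp_le[of "int p" "2 * m mod int p"] by linarith
    show "\<not> int p dvd 2 * m"
    proof
      assume "int p dvd 2 * m"
      then have "int p dvd m"
        using coprime_2_p by (simp add: coprime_dvd_mult_right_iff coprime_commute)
      with m show False using zdvd_imp_le[of "int p" m] by auto
    qed
    show "int p dvd 2 * m mod int p - 2 * m"
      by (simp flip: mod_eq_dvd_iff)
  qed
  then have "p_multiple p 1 (?S - ?S / 4)"
    unfolding sum_subtractf doubled halved .
  moreover have "p_integral p (4 / 3)"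
    using p_integral_divide_less[of 4 3] gt_3 by simp
  ultimately have "p_multiple p 1 ((?S - ?S / 4) * (4 / 3))"
    by (rule p_multiple_mult_right)
  then show ?thesis by simp
qed

lemma harmonic_sq_half_cong:
  assumes p: "p = 2 * n + 1"
  shows "p_multiple p 1 (harmonic_sq n)"
proof -
  let ?S = "harmonic_sq (p - 1)"
  have "?S = (\<Sum>i=1..n. 1 / of_nat i ^ 2 + 1 / of_nat (p - i) ^ 2)"
    unfolding harmonic_sq_def p using sum_double_interval_reflect[of "\<lambda>i. 1 / rat_of_nat i ^ 2" n]
    by simp
  then have "?S - 2 * harmonic_sq n = (\<Sum>i=1..n. 1 / of_nat (p - i) ^ 2 - 1 / of_nat i ^ 2)"
    unfolding harmonic_sq_def mult_2 by (simp add: sum.distrib sum_subtractf)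
  moreover have "p_multiple p 1 (\<Sum>i=1..n. 1 / of_nat (p - i) ^ 2 - 1 / of_nat i ^ 2)"
  proof (intro p_multiple_sum)
    fix i assume "i \<in> {1..n}"
    then have "0 < i" "i < p" "0 < p - i" "p - i < p" using p by auto
    then have "\<not> p dvd i" "\<not> p dvd p - i" using not_dvd_less by blast+
    then have "\<not> int p dvd int (p - i)" "\<not> int p dvd - int i"
      by (simp_all only: int_dvd_int_iff dvd_minus_iff not_False_eq_True)
    moreover have "int p dvd int (p - i) - - int i"
      using \<open>i < p\<close> by (simp add: of_nat_diff)
    ultimately have "p_multiple p 1 (1 / of_int (int (p - i)) ^ 2 - 1 / of_int (- int i) ^ 2)"
      by (rule p_multiple_inverse_square_diff)
    then show "p_multiple p 1 (1 / of_nat (p - i) ^ 2 - 1 / of_nat i ^ 2)" by simp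
  qed
  ultimately have "p_multiple p 1 (?S - (?S - 2 * harmonic_sq n))"
    using p_multiple_diff[OF harmonic_sq_full_cong] by simp
  then show ?thesis using p_multiple_half[of 1 "2 * harmonic_sq n"] by simp
qed

lemma harmonic_full_cong: "p_multiple p 2 (harmonic (p - 1))"
proof -
  obtain n where p: "p = 2 * n + 1" using odd_p oddE by blast
  let ?P = "rat_of_nat p"
  let ?R = "\<Sum>i=1..n. 1 / (of_nat i ^ 2 * of_nat (p - i))"
  have pair: "1 / of_nat i + 1 / of_nat (p - i) = - ?P * (1 / of_nat i ^ 2)
      + ?P ^ 2 * (1 / (of_nat i ^ 2 * of_nat (p - i)))" if "i \<in> {1..n}" for i
  proof -
    have "of_nat (p - i) = ?P - of_nat i" "?P - of_nat i \<noteq> 0" "(of_nat i :: rat) \<noteq> 0"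
      using that p by (auto simp: of_nat_diff)
    then show ?thesis by (simp add: field_simps power2_eq_square)
  qed
  have "harmonic (p - 1) = (\<Sum>i=1..n. 1 / of_nat i + 1 / of_nat (p - i))"
    unfolding harmonic_def p using sum_double_interval_reflect[of "\<lambda>i. 1 / rat_of_nat i" n]
    by simp
  also have "\<dots> = - ?P * harmonic_sq n + ?P ^ 2 * ?R"
    unfolding harmonic_sq_def sum_distrib_left sum.distrib[symmetric] using pair by (rule sum.cong[OF refl])
  finally have eq: "harmonic (p - 1) = - ?P * harmonic_sq n + ?P ^ 2 * ?R" .
  have "p_multiple p 2 (- ?P * harmonic_sq n)"
    by (rule p_multiple_mult[OF p_multiple_uminus[OF p_multiple_of_nat_p] harmonic_sq_half_cong[OF p]]) simp
  moreover have "p_integral p ?R"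
  proof (intro p_integral_sum)
    fix i assume "i \<in> {1..n}"
    then have "\<not> p dvd i" "\<not> p dvd p - i" using p not_dvd_less by auto
    then have "\<not> p dvd i ^ 2 * (p - i)"
      using prime by (simp add: prime_dvd_mult_iff prime_dvd_power_iff)
    then show "p_integral p (1 / (of_nat i ^ 2 * of_nat (p - i)))"
      using p_integral_divide_nat[OF p_integral_1] by (metis of_nat_mult of_nat_power)
  qed
  then have "p_multiple p 2 (?P ^ 2 * ?R)"
    by (simp only: p_multiple_power_mult_iff)
  ultimately show ?thesis
    unfolding eq by (rule p_multiple_add)
qed

end

section \<open>Binomial identities\<close>

lemma gbinomial_shift_Suc:
  fixes x :: "'a::field_char_0"
  shows "(x + of_nat (Suc m)) gchoose Suc m = ((x + of_nat m) gchoose m) * (1 + x / of_nat (Suc m))"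
proof -
  have "x + of_nat (Suc m) = (x + of_nat m) + 1" by simp
  then have "(x + of_nat (Suc m)) gchoose Suc m = ((x + of_nat m) gchoose m) * ((x + of_nat m + 1) / of_nat (Suc m))"
    by (simp only: gbinomial_rec)
  also have "(x + of_nat m + 1) / of_nat (Suc m) = 1 + x / of_nat (Suc m)"
    using of_nat_neq_0[of m, where 'a='a] by (simp add: field_simps)
  finally show ?thesis .
qed

lemma Suc_times_central_binomial: "Suc n * (2 * Suc n choose Suc n) = 2 * (2 * n + 1) * (2 * n choose n)"
proof -
  have "Suc n * (2 * Suc n choose Suc n) = 2 * (Suc n * ((2 * n + 1) choose n))"
    using Suc_times_binomial[of n "2 * n + 1"] by (simp add: algebra_simps del: binomial_Suc_Suc)
  also have "Suc n * ((2 * n + 1) choose n) = (2 * n + 1) * (2 * n choose n)"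
    using Suc_times_binomial[of n "2 * n"] binomial_symmetric[of n "2 * n + 1"]
    by (simp del: binomial_Suc_Suc)
  finally show ?thesis by simp
qed

lemma gbinomial_minus_half:
  "((- 1 / 2 :: 'a::field_char_0) gchoose n) = (- 1) ^ n * of_nat (2 * n choose n) / 4 ^ n"
proof (induction n)
  case (Suc n)
  let ?a = "- 1 / 2 :: 'a"
  let ?C = "of_nat (2 * n choose n) :: 'a"
  have "(of_nat (Suc n * (2 * Suc n choose Suc n)) :: 'a) = of_nat (2 * (2 * n + 1) * (2 * n choose n))"
    by (simp only: Suc_times_central_binomial)
  then have central: "of_nat (2 * Suc n choose Suc n) = 2 * (2 * of_nat n + 1) * ?C / of_nat (Suc n)"
    using of_nat_neq_0[of n, where 'a='a] by (simp add: field_simps del: binomial_Suc_Suc)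
  have "of_nat (Suc n) * (?a gchoose Suc n) = (?a - of_nat n) * (?a gchoose n)"
    using gbinomial_mult_1[of ?a n] by (simp add: algebra_simps)
  also have "\<dots> = of_nat (Suc n) * ((- 1) ^ Suc n * of_nat (2 * Suc n choose Suc n) / 4 ^ Suc n)"
    unfolding Suc.IH central using of_nat_neq_0[of n, where 'a='a]
    by (simp add: field_simps del: of_nat_Suc)
  finally show ?case by (simp only: mult_cancel_left of_nat_eq_0_iff) simp
qed simp

lemma gbinomial_minus_Suc:
  "((- of_nat (Suc n) :: 'a::field_char_0) gchoose n) = (- 1) ^ n * of_nat (2 * n choose n)"
proof -
  have "(of_nat (Suc n) + of_nat n - 1 :: 'a) = of_nat (2 * n)" by simp
  then show ?thesis by (simp only: gbinomial_minus binomial_gbinomial)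
qed

lemma gbinomial_minus_odd_eq:
  "((- of_nat (2 * n + 1) + of_nat n :: 'a::field_char_0) gchoose n)
    = 4 ^ n * ((- of_nat (2 * n + 1) / 2 + of_nat n) gchoose n)"
proof -
  have "(- of_nat (2 * n + 1) + of_nat n :: 'a) = - of_nat (Suc n)"
    "(- of_nat (2 * n + 1) / 2 + of_nat n :: 'a) = - 1 / 2"
    by (simp_all add: field_simps)
  then show ?thesis by (simp only: gbinomial_minus_Suc gbinomial_minus_half) simp
qed

lemma binomial_identity_G:
  "((6 * n + 4) choose (3 * n + 2)) * ((3 * n + 2) choose (2 * n + 1)) * ((3 * n + 1) choose n)
   = 6 * ((4 * n + 1) choose (2 * n)) * ((2 * n + 2) choose (n + 1)) * ((6 * n + 2) choose (2 * n))"
proof -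
  define f :: "nat \<Rightarrow> rat" where "f = fact"
  define x :: rat where "x = of_nat n"
  have binom: "of_nat (a choose b) = f a / (f b * f (a - b))" if "b \<le> a" for a b
    unfolding f_def using that by (rule binomial_fact)
  have rec: "f (6 * n + 4) = (6 * x + 4) * (6 * x + 3) * f (6 * n + 2)"
    "f (4 * n + 2) = (4 * x + 2) * f (4 * n + 1)"
    "f (3 * n + 2) = (3 * x + 2) * f (3 * n + 1)"
    "f (2 * n + 2) = (2 * x + 2) * (2 * x + 1) * f (2 * n)"
    "f (2 * n + 1) = (2 * x + 1) * f (2 * n)"
    "f (n + 1) = (x + 1) * f n"
    unfolding f_def x_def by (simp_all add: numeral_eq_Suc algebra_simps)
  (* opaque names for the factorials keep the simplifier away from their arguments *)
  obtain A B C D E where atoms: "A = f (6 * n + 2)" "B = f (3 * n + 1)" "C = f (2 * n)" "D = f n"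
    "E = f (4 * n + 1)" and "A \<noteq> 0" "B \<noteq> 0" "C \<noteq> 0" "D \<noteq> 0" "E \<noteq> 0"
    by (simp add: f_def)
  moreover have "x \<ge> 0" by (simp add: x_def)
  then have "6 * x + 4 \<noteq> 0" "6 * x + 3 \<noteq> 0" "4 * x + 2 \<noteq> 0" "3 * x + 2 \<noteq> 0"
    "2 * x + 2 \<noteq> 0" "2 * x + 1 \<noteq> 0" "x + 1 \<noteq> 0"
    by linarith+
  ultimately have "f (6 * n + 4) / (f (3 * n + 2) * f (3 * n + 2)) * (f (3 * n + 2) / (f (2 * n + 1) * f (n + 1)))
        * (f (3 * n + 1) / (f n * f (2 * n + 1)))
      = 6 * (f (4 * n + 1) / (f (2 * n) * f (2 * n + 1))) * (f (2 * n + 2) / (f (n + 1) * f (n + 1)))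
        * (f (6 * n + 2) / (f (2 * n) * f (4 * n + 2)))"
    unfolding rec atoms[symmetric] by (simp add: divide_simps) (simp add: algebra_simps)
  then have "(of_nat (((6 * n + 4) choose (3 * n + 2)) * ((3 * n + 2) choose (2 * n + 1))
        * ((3 * n + 1) choose n)) :: rat)
      = of_nat (6 * ((4 * n + 1) choose (2 * n)) * ((2 * n + 2) choose (n + 1)) * ((6 * n + 2) choose (2 * n)))"
    unfolding of_nat_mult by (subst (1 2 3 4 5 6) binom; simp)
  then show ?thesis by (simp only: of_nat_eq_iff)
qed

lemma G_central_eq:
  "G (2 * n + 1) (n + 1) = of_nat (2 * n + 1) * of_nat ((4 * n + 1) choose (2 * n)) ^ 2
     * of_nat ((6 * n + 2) choose (2 * n)) * of_nat (2 * n choose n)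
     / (of_nat ((3 * n + 1) choose n) * 4 ^ (7 * n))"
proof -
  have idx: "2 * (2 * n + 1) = 4 * n + 2" "2 * (n + 1) = 2 * n + 2"
    "4 * n + 2 + (2 * n + 2) = 6 * n + 4" "6 * n + 4 - 1 = 6 * n + 3" "4 * n + 2 - (2 * n + 2) = 2 * n"
    "2 * n + 1 + (n + 1) = 3 * n + 2" "2 * n + 1 - (n + 1) = n" "8 * (2 * n + 1) - (2 * n + 2) - 4 = 14 * n + 2"
    by simp_all
  have "(2 * n + 1) * ((4 * n + 2) choose (2 * n + 1)) = (2 * n + 1) * (2 * ((4 * n + 1) choose (2 * n)))"
    using Suc_times_binomial[of "2 * n" "4 * n + 1"] by (simp add: algebra_simps del: binomial_Suc_Suc)
  then have double: "(4 * n + 2) choose (2 * n + 1) = 2 * ((4 * n + 1) choose (2 * n))"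
    by (simp only: mult_cancel_left) simp
  obtain a b c d e g w where atoms:
    "a = rat_of_nat ((4 * n + 1) choose (2 * n))" "b = rat_of_nat (2 * n choose n)"
    "c = rat_of_nat ((6 * n + 4) choose (3 * n + 2))" "d = rat_of_nat ((3 * n + 2) choose (2 * n + 1))"
    "e = rat_of_nat ((2 * n + 2) choose (n + 1))" "g = rat_of_nat ((6 * n + 2) choose (2 * n))"
    "w = rat_of_nat ((3 * n + 1) choose n)"
    by blast
  have nonzero: "d \<noteq> 0" "e \<noteq> 0" "w \<noteq> 0"
    by (simp_all add: atoms del: binomial_Suc_Suc)
  have "rat_of_nat (((6 * n + 4) choose (3 * n + 2)) * ((3 * n + 2) choose (2 * n + 1)) * ((3 * n + 1) choose n))
      = rat_of_nat (6 * ((4 * n + 1) choose (2 * n)) * ((2 * n + 2) choose (n + 1)) * ((6 * n + 2) choose (2 * n)))"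
    by (simp only: binomial_identity_G)
  then have "c * d * w = 6 * a * e * g"
    unfolding atoms of_nat_mult of_nat_numeral .
  then have c: "c = 6 * a * e * g / (d * w)"
    using nonzero by (simp add: field_simps)
  define x where "x = rat_of_nat n"
  have "x \<ge> 0" by (simp add: x_def)
  then have "2 * x + 1 \<noteq> 0" "6 * x + 3 \<noteq> 0" by linarith+
  have "G (2 * n + 1) (n + 1) = (2 * x + 1) ^ 2 * (2 * a) * c * b * d / (2 ^ (14 * n + 2) * (6 * x + 3) * e)"
    unfolding G_def idx double of_nat_mult of_nat_power
    unfolding atoms[symmetric] of_nat_add of_nat_mult of_nat_numeral of_nat_1 x_def[symmetric] ..
  also have "(2 :: rat) ^ (14 * n + 2) = 4 * 4 ^ (7 * n)"
    by (simp add: power_add power_mult)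
  also have "(2 * x + 1) ^ 2 * (2 * a) * c * b * d / (4 * 4 ^ (7 * n) * (6 * x + 3) * e)
      = (2 * x + 1) * a ^ 2 * g * b / (w * 4 ^ (7 * n))"
    unfolding c using nonzero \<open>2 * x + 1 \<noteq> 0\<close> \<open>6 * x + 3 \<noteq> 0\<close>
    by (simp add: divide_simps) (simp add: algebra_simps power2_eq_square)
  finally show ?thesis
    unfolding atoms x_def by (simp only: of_nat_add of_nat_mult of_nat_numeral of_nat_1)
qed

section \<open>Congruences modulo p^3\<close>

context prime_gt_3
begin

lemma gbinomial_cong_harmonic:
  assumes x: "p_multiple p 1 x" and "m < p"
  shows "p_multiple p 3 (((x + of_nat m) gchoose m)
           - (1 + x * harmonic m + x ^ 2 * ((harmonic m ^ 2 - harmonic_sq m) / 2)))"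
  using \<open>m < p\<close>
proof (induction m)
  case 0
  then show ?case by (simp add: harmonic_def harmonic_sq_def)
next
  case (Suc m)
  define B where "B = (x + of_nat m) gchoose m"
  define H where "H = harmonic m"
  define Q where "Q = (harmonic m ^ 2 - harmonic_sq m) / 2"
  define a where "a = rat_of_nat (Suc m)"
  have IH: "p_multiple p 3 (B - (1 + x * H + x ^ 2 * Q))"
    using Suc by (simp add: B_def H_def Q_def)
  have "a \<noteq> 0" by (simp add: a_def)
  have "harmonic (Suc m) = H + 1 / a" "harmonic_sq (Suc m) = harmonic_sq m + 1 / a ^ 2"
    by (simp_all add: harmonic_def harmonic_sq_def H_def a_def)
  moreover have "(x + of_nat (Suc m)) gchoose Suc m = B * (1 + x / a)"
    unfolding B_def a_def by (rule gbinomial_shift_Suc)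
  moreover have "B * (1 + x / a) - (1 + x * (H + 1 / a)
        + x ^ 2 * (((H + 1 / a) ^ 2 - (harmonic_sq m + 1 / a ^ 2)) / 2))
      = (B - (1 + x * H + x ^ 2 * Q)) * (1 + x / a) + x ^ 3 * (Q / a)"
    using \<open>a \<noteq> 0\<close> unfolding Q_def H_def
    by (simp add: field_simps power2_eq_square power3_eq_cube)
  ultimately have eq: "((x + of_nat (Suc m)) gchoose Suc m)
        - (1 + x * harmonic (Suc m) + x ^ 2 * ((harmonic (Suc m) ^ 2 - harmonic_sq (Suc m)) / 2))
      = (B - (1 + x * H + x ^ 2 * Q)) * (1 + x / a) + x ^ 3 * (Q / a)"
    by simp
  moreover have div_a: "p_integral p (y / a)" if "p_integral p y" for y
    using p_integral_divide_less[OF that, of "Suc m"] Suc.prems by (simp add: a_def)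
  moreover have "p_integral p H" "p_integral p Q"
    using Suc.prems p_integral_harmonic[of m] p_integral_harmonic_sq[of m]
    by (auto simp: H_def Q_def intro!: p_integral_half)
  moreover have "p_multiple p 3 (x ^ 3)"
    by (rule p_multiple_power[OF x]) simp
  ultimately show ?case
    unfolding eq using IH p_multiple_imp_p_integral[OF x]
    by (intro p_multiple_add p_multiple_mult_right p_integral_add p_integral_1 div_a)
qed

lemma p_multiple_fermat: "p_multiple p 1 (2 ^ (p - 1) - 1)"
proof -
  have "\<not> p dvd 2" using gt_3 by (auto dest: dvd_imp_le)
  then have "[2 ^ (p - 1) = 1] (mod p)"
    by (rule fermat_theorem[OF prime])
  then obtain k where "2 ^ (p - 1) - 1 = p * k"
    using cong_to_1_nat by blast
  moreover have "(2 :: rat) ^ (p - 1) - 1 = of_nat (2 ^ (p - 1) - 1)"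
    using one_le_power[of "2 :: nat" "p - 1"] by (simp add: of_nat_diff)
  ultimately have "(2 :: rat) ^ (p - 1) - 1 = of_nat p ^ 1 * of_nat k"
    by simp
  then show ?thesis by (simp only: p_multiple_power_mult_iff p_integral_of_nat)
qed

lemma wolstenholme_binomial_cong: "p_multiple p 3 (of_nat ((c * p + (p - 1)) choose (p - 1)) - 1)"
proof -
  let ?x = "rat_of_nat (c * p)"
  let ?H = "harmonic (p - 1)" and ?S = "harmonic_sq (p - 1)"
  have x: "p_multiple p 1 ?x"
    using p_multiple_mult_left[OF p_integral_of_nat[of c] p_multiple_of_nat_p] by simp
  have "p_multiple p 3 (?x * ?H)"
    by (rule p_multiple_mult[OF x harmonic_full_cong]) simp
  moreover have "p_multiple p 1 ((?H ^ 2 - ?S) / 2)"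
    using p_multiple_power[OF harmonic_full_cong, of 1 2] harmonic_sq_full_cong
    by (intro p_multiple_half p_multiple_diff) simp_all
  then have "p_multiple p 3 (?x ^ 2 * ((?H ^ 2 - ?S) / 2))"
    by (rule p_multiple_mult[OF p_multiple_power[OF x order_refl]]) simp
  ultimately have "p_multiple p 3 ((1 + ?x * ?H + ?x ^ 2 * ((?H ^ 2 - ?S) / 2)) - 1)"
    by (simp add: p_multiple_add)
  with gbinomial_cong_harmonic[OF x, of "p - 1"] gt_3
  have "p_multiple p 3 ((?x + of_nat (p - 1) gchoose (p - 1)) - 1)"
    by (auto intro: p_multiple_diff_trans)
  then show ?thesis
    by (simp only: binomial_gbinomial of_nat_add)
qed

lemma gbinomial_half_cong:
  assumes p: "p = 2 * n + 1" and x: "p_multiple p 1 x"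
  shows "p_multiple p 3 (((x + of_nat n) gchoose n) - (1 + x * harmonic n + (x * harmonic n) ^ 2 / 2))"
proof -
  let ?H = "harmonic n" and ?S = "harmonic_sq n"
  have "p_multiple p 3 (x ^ 2 * ?S / 2)"
    by (intro p_multiple_half p_multiple_mult[OF p_multiple_power[OF x order_refl] harmonic_sq_half_cong[OF p]])
      simp
  moreover have "(1 + x * ?H + x ^ 2 * ((?H ^ 2 - ?S) / 2)) - (1 + x * ?H + (x * ?H) ^ 2 / 2)
      = - (x ^ 2 * ?S / 2)"
    by (simp add: field_simps power2_eq_square)
  ultimately have "p_multiple p 3 ((1 + x * ?H + x ^ 2 * ((?H ^ 2 - ?S) / 2)) - (1 + x * ?H + (x * ?H) ^ 2 / 2))"
    by (simp add: p_multiple_uminus)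
  moreover have "n < p" using p by simp
  ultimately show ?thesis
    using p_multiple_diff_trans[OF gbinomial_cong_harmonic[OF x]] by blast
qed

(* 1 - h + h^2/2 is exp(-h) to second order: the hypotheses say exp(-h/2) = 1 + t and the
   conclusion says h = -2 log(1 + t), both modulo p^3. *)
lemma truncated_exp_cong:
  assumes t: "p_multiple p 1 t" and h: "p_multiple p 1 h"
    and U: "p_multiple p 3 (U - (1 - h + h ^ 2 / 2))"
    and W: "p_multiple p 3 (W - (1 - h / 2 + (h / 2) ^ 2 / 2))"
    and UW: "U = (1 + t) * W"
  shows "p_multiple p 3 (h + 2 * t - t ^ 2)"
proof -
  let ?P = "rat_of_nat p"
  define E where "E = (1 - h + h ^ 2 / 2) - (1 + t) * (1 - h / 2 + (h / 2) ^ 2 / 2)"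
  have "E = (1 + t) * (W - (1 - h / 2 + (h / 2) ^ 2 / 2)) - (U - (1 - h + h ^ 2 / 2))"
    unfolding E_def UW by (simp add: algebra_simps)
  then have "p_multiple p 3 E"
    using U W p_integral_add[OF p_integral_1 p_multiple_imp_p_integral[OF t]]
    by (simp add: p_multiple_diff p_multiple_mult_left)
  then obtain e where e: "p_integral p e" "E = ?P ^ 3 * e"
    unfolding p_multiple_def by blast
  obtain \<tau> \<eta> where \<tau>: "p_integral p \<tau>" "t = ?P * \<tau>" and \<eta>: "p_integral p \<eta>" "h = ?P * \<eta>"
    using t h unfolding p_multiple_def by auto
  define \<sigma> where "\<sigma> = - 2 * ?P * e + \<tau> * \<eta> + 3 * \<eta> ^ 2 / 2 / 2 - ?P * \<tau> * \<eta> ^ 2 / 2 / 2"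
  have "h + 2 * t = - 2 * E + t * h + 3 * h ^ 2 / 4 - t * h ^ 2 / 4"
    unfolding E_def by (simp add: field_simps power2_eq_square)
  then have s: "h + 2 * t = ?P ^ 2 * \<sigma>"
    unfolding \<sigma>_def e(2) \<eta>(2) \<tau>(2) by (simp add: field_simps power2_eq_square power3_eq_cube)
  have "h + 2 * t - t ^ 2 = - 2 * E - 2 * t * (h + 2 * t) + 3 * (h + 2 * t) ^ 2 / 4 - t * h ^ 2 / 4"
    unfolding E_def by (simp add: field_simps power2_eq_square)
  also have "\<dots> = ?P ^ 3 * (- 2 * e - 2 * \<tau> * \<sigma> + 3 * ?P * \<sigma> ^ 2 / 2 / 2 - \<tau> * \<eta> ^ 2 / 2 / 2)"
    unfolding s unfolding e(2) \<eta>(2) \<tau>(2) by (simp add: field_simps power2_eq_square power3_eq_cube)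
  also have "p_multiple p 3 \<dots>"
    unfolding p_multiple_power_mult_iff \<sigma>_def using e(1) \<tau>(1) \<eta>(1)
    by (intro p_integral_add p_integral_diff p_integral_mult p_integral_half p_integral_power) simp_all
  finally show ?thesis .
qed

lemma harmonic_half_cong:
  assumes p: "p = 2 * n + 1"
  shows "p_multiple p 3 (of_nat p * harmonic n + 2 * (2 ^ (p - 1) - 1) - (2 ^ (p - 1) - 1) ^ 2)"
proof (rule truncated_exp_cong)
  let ?P = "rat_of_nat p"
  show "p_multiple p 1 (2 ^ (p - 1) - 1)" by (rule p_multiple_fermat)
  show "p_multiple p 1 (?P * harmonic n)"
    using p by (intro p_multiple_mult_right p_multiple_of_nat_p p_integral_harmonic) simp
  have "p_multiple p 3 (((- ?P + of_nat n) gchoose n)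
      - (1 + (- ?P) * harmonic n + ((- ?P) * harmonic n) ^ 2 / 2))"
    by (intro gbinomial_half_cong[OF p] p_multiple_uminus p_multiple_of_nat_p)
  then show "p_multiple p 3 (((- ?P + of_nat n) gchoose n)
      - (1 - ?P * harmonic n + (?P * harmonic n) ^ 2 / 2))"
    by simp
  have "p_multiple p 3 (((- ?P / 2 + of_nat n) gchoose n)
      - (1 + (- ?P / 2) * harmonic n + ((- ?P / 2) * harmonic n) ^ 2 / 2))"
    by (intro gbinomial_half_cong[OF p] p_multiple_half p_multiple_uminus p_multiple_of_nat_p)
  then show "p_multiple p 3 (((- ?P / 2 + of_nat n) gchoose n)
      - (1 - ?P * harmonic n / 2 + (?P * harmonic n / 2) ^ 2 / 2))"
    by simp
  have "(2 :: rat) ^ (p - 1) = 4 ^ n"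
    unfolding p by (simp add: power_mult)
  then show "(- ?P + of_nat n) gchoose n = (1 + (2 ^ (p - 1) - 1)) * ((- ?P / 2 + of_nat n) gchoose n)"
    unfolding p by (simp only: gbinomial_minus_odd_eq) simp
qed

lemma harmonic_half_quadratic_cong:
  assumes p: "p = 2 * n + 1" and c: "p_integral p c"
  defines "h \<equiv> of_nat p * harmonic n" and "t \<equiv> 2 ^ (p - 1) - 1"
  shows "p_multiple p 3 ((1 + c * h + h ^ 2 / 2) - (1 - 2 * c * t + (c + 2) * t ^ 2))"
proof -
  let ?P = "rat_of_nat p"
  obtain \<rho> where \<rho>: "p_integral p \<rho>" "h + 2 * t - t ^ 2 = ?P ^ 3 * \<rho>"
    using harmonic_half_cong[OF p] unfolding p_multiple_def h_def t_def by blast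
  obtain \<tau> where \<tau>: "p_integral p \<tau>" "t = ?P * \<tau>"
    using p_multiple_fermat unfolding p_multiple_def t_def by auto
  have "(1 + c * h + h ^ 2 / 2) - (1 - 2 * c * t + (c + 2) * t ^ 2)
      = c * (h + 2 * t - t ^ 2) - 2 * t ^ 3 + t ^ 4 / 2 + (h + 2 * t - t ^ 2) * (- 2 * t + t ^ 2)
        + (h + 2 * t - t ^ 2) ^ 2 / 2"
    by (simp add: field_simps power2_eq_square power3_eq_cube power4_eq_xxxx)
  also have "\<dots> = ?P ^ 3 * (c * \<rho> - 2 * \<tau> ^ 3 + ?P * \<tau> ^ 4 / 2
      + \<rho> * (- 2 * ?P * \<tau> + ?P ^ 2 * \<tau> ^ 2) + ?P ^ 3 * \<rho> ^ 2 / 2)"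
    unfolding \<rho>(2) unfolding \<tau>(2) by (simp add: field_simps power2_eq_square power3_eq_cube power4_eq_xxxx)
  also have "p_multiple p 3 \<dots>"
    unfolding p_multiple_power_mult_iff using c \<rho>(1) \<tau>(1)
    by (intro p_integral_add p_integral_diff p_integral_mult p_integral_half p_integral_power) simp_all
  finally show ?thesis .
qed

lemma central_binomial_cong:
  assumes p: "p = 2 * n + 1"
  shows "p_multiple p 3 ((- 1) ^ n * of_nat (2 * n choose n) - 4 ^ (p - 1))"
proof -
  let ?P = "rat_of_nat p" and ?t = "(2 :: rat) ^ (p - 1) - 1"
  have "- ?P + of_nat n = - of_nat (Suc n)"
    using p by simp
  then have "p_multiple p 3 ((- 1) ^ n * of_nat (2 * n choose n)
      - (1 + (- ?P) * harmonic n + ((- ?P) * harmonic n) ^ 2 / 2))"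
    using gbinomial_half_cong[OF p p_multiple_uminus[OF p_multiple_of_nat_p]]
    by (simp only: gbinomial_minus_Suc)
  moreover have "p_multiple p 3 ((1 + (- ?P) * harmonic n + ((- ?P) * harmonic n) ^ 2 / 2) - 4 ^ (p - 1))"
  proof -
    have "(1 - 2 * (- 1) * ?t + (- 1 + 2) * ?t ^ 2) = 4 ^ (p - 1)"
      by (simp add: algebra_simps power2_eq_square flip: power_mult_distrib)
    then show ?thesis
      using harmonic_half_quadratic_cong[OF p, of "- 1"] by simp
  qed
  ultimately show ?thesis
    by (rule p_multiple_diff_trans)
qed

lemma binomial_three_half_cong:
  assumes p: "p = 2 * n + 1"
  shows "p_multiple p 3 (of_nat ((3 * n + 1) choose n) - (1 - 2 * (2 ^ (p - 1) - 1) + 3 * (2 ^ (p - 1) - 1) ^ 2))"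
proof -
  let ?P = "rat_of_nat p"
  have "?P + of_nat n = of_nat (3 * n + 1)"
    using p by simp
  then have "of_nat ((3 * n + 1) choose n) = (?P + of_nat n) gchoose n"
    by (simp only: binomial_gbinomial)
  then have "p_multiple p 3 (of_nat ((3 * n + 1) choose n) - (1 + ?P * harmonic n + (?P * harmonic n) ^ 2 / 2))"
    using gbinomial_half_cong[OF p p_multiple_of_nat_p] by simp
  moreover have "p_multiple p 3 ((1 + ?P * harmonic n + (?P * harmonic n) ^ 2 / 2)
      - (1 - 2 * (2 ^ (p - 1) - 1) + 3 * (2 ^ (p - 1) - 1) ^ 2))"
    using harmonic_half_quadratic_cong[OF p, of 1] by simp
  ultimately show ?thesis
    by (rule p_multiple_diff_trans)
qed

lemma second_order_inverse_cong:
  assumes t: "p_multiple p 1 t"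
  shows "p_multiple p 3 ((1 + t) ^ 2 - (1 - 2 * t + 3 * t ^ 2) * ((1 + t) ^ 7 * (1 - 3 * t + 6 * t ^ 2)))"
proof -
  have "(1 + t) ^ 2 - (1 - 2 * t + 3 * t ^ 2) * ((1 + t) ^ 7 * (1 - 3 * t + 6 * t ^ 2))
      = t ^ 3 * (- 14 - 46 * t - 56 * t ^ 2 - 70 * t ^ 3 - 176 * t ^ 4 - 289 * t ^ 5 - 246 * t ^ 6
                 - 105 * t ^ 7 - 18 * t ^ 8)"
    by (simp add: algebra_simps eval_nat_numeral)
  moreover have "p_multiple p 3 (t ^ 3)"
    by (rule p_multiple_power[OF t]) simp
  ultimately show ?thesis
    using p_multiple_imp_p_integral[OF t]
    by (simp add: p_multiple_mult_right p_integral_add p_integral_diff p_integral_mult p_integral_power)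
qed

lemma quotient_expansion_cong:
  assumes t: "p_multiple p 1 t"
    and A: "p_multiple p 3 (A - 1)" and B: "p_multiple p 3 (B - 1)"
    and U: "p_multiple p 3 (U - (1 + t) ^ 2)" and V: "p_multiple p 3 (V - (1 - 2 * t + 3 * t ^ 2))"
  shows "p_multiple p 3 (A ^ 2 * B * U / (V * (1 + t) ^ 7) - (1 - 3 * t + 6 * t ^ 2))"
proof -
  define M where "M = (1 + t) ^ 7 * (1 - 3 * t + 6 * t ^ 2)"
  have int_t: "p_integral p t" using p_multiple_imp_p_integral[OF t] .
  have int_M: "p_integral p M"
    unfolding M_def using int_t by (intro p_integral_mult p_integral_power p_integral_add p_integral_diff) simp_all
  have int_A: "p_integral p A" "p_integral p B"
    using A B by (auto elim!: p_integral_if_p_multiple_diff)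
  have "p_multiple p 3 (A * A - 1 * 1)"
    by (rule p_multiple_mult_diff[OF A A int_A(1) p_integral_1])
  then have "p_multiple p 3 (A * A * B - 1 * 1 * 1)"
    by (rule p_multiple_mult_diff[OF _ B]) (use int_A in \<open>auto intro: p_integral_mult\<close>)
  then have "p_multiple p 3 (A * A * B * U - 1 * 1 * 1 * (1 + t) ^ 2)"
    by (rule p_multiple_mult_diff[OF _ U])
      (use int_A int_t in \<open>auto intro!: p_integral_mult p_integral_power p_integral_add\<close>)
  moreover have "p_multiple p 3 ((1 + t) ^ 2 - (1 - 2 * t + 3 * t ^ 2) * M)"
    unfolding M_def by (rule second_order_inverse_cong[OF t])
  moreover have "p_multiple p 3 ((V - (1 - 2 * t + 3 * t ^ 2)) * M)"
    using V int_M by (rule p_multiple_mult_right)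
  ultimately have "p_multiple p 3 ((A * A * B * U - 1 * 1 * 1 * (1 + t) ^ 2)
      + ((1 + t) ^ 2 - (1 - 2 * t + 3 * t ^ 2) * M) - (V - (1 - 2 * t + 3 * t ^ 2)) * M)"
    by (intro p_multiple_diff[OF p_multiple_add])
  then have numerator: "p_multiple p 3 (A ^ 2 * B * U - V * M)"
    by (simp add: algebra_simps power2_eq_square)
  have "V - 1 = (V - (1 - 2 * t + 3 * t ^ 2)) + t * (3 * t - 2)"
    by (simp add: algebra_simps power2_eq_square)
  also have "p_multiple p 1 \<dots>"
    by (rule p_multiple_add[OF p_multiple_mono[OF _ V] p_multiple_mult_right[OF t]])
      (simp_all add: int_t p_integral_diff p_integral_mult)
  finally have V_unit: "V \<noteq> 0" "p_integral p (1 / V)"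
    by (rule p_integral_inverse)+
  have "p_multiple p 1 ((1 + t) - 1)" using t by simp
  then have t_unit: "1 + t \<noteq> 0" "p_integral p (1 / (1 + t))"
    by (rule p_integral_inverse)+
  have "A ^ 2 * B * U / (V * (1 + t) ^ 7) - (1 - 3 * t + 6 * t ^ 2)
      = (A ^ 2 * B * U - V * M) * ((1 / V) * (1 / (1 + t)) ^ 7)"
    unfolding M_def using V_unit(1) t_unit(1) by (simp add: field_simps)
  also have "p_multiple p 3 \<dots>"
    using numerator V_unit(2) t_unit(2) by (intro p_multiple_mult_right p_integral_mult p_integral_power)
  finally show ?thesis .
qed

lemma G_half_cong:
  assumes p: "p = 2 * n + 1"
  defines "t \<equiv> (2 :: rat) ^ (p - 1) - 1"
  shows "p_multiple p 4 (G p (n + 1) - (- 1) ^ n * of_nat p * (1 - 3 * t + 6 * t ^ 2))"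
proof -
  let ?A = "rat_of_nat ((4 * n + 1) choose (2 * n))" and ?B = "rat_of_nat ((6 * n + 2) choose (2 * n))"
  let ?U = "(- 1) ^ n * rat_of_nat (2 * n choose n)" and ?V = "rat_of_nat ((3 * n + 1) choose n)"
  let ?Q = "?A ^ 2 * ?B * ?U / (?V * (1 + t) ^ 7)"
  have four: "4 ^ n = 1 + t"
    unfolding t_def p by (simp add: power_mult)
  have "p_multiple p 3 (?Q - (1 - 3 * t + 6 * t ^ 2))"
  proof (rule quotient_expansion_cong)
    show "p_multiple p 1 t" unfolding t_def by (rule p_multiple_fermat)
    show "p_multiple p 3 (?A - 1)" "p_multiple p 3 (?B - 1)"
      using wolstenholme_binomial_cong[of 1] wolstenholme_binomial_cong[of 2] p
      by (simp_all add: algebra_simps)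
    have "(4 :: rat) ^ (p - 1) = (1 + t) ^ 2"
      unfolding four[symmetric] p by (simp flip: power_mult add: mult.commute)
    then show "p_multiple p 3 (?U - (1 + t) ^ 2)"
      using central_binomial_cong[OF p] by simp
    show "p_multiple p 3 (?V - (1 - 2 * t + 3 * t ^ 2))"
      using binomial_three_half_cong[OF p] by (simp add: t_def)
  qed
  then have "p_multiple p 4 ((- 1) ^ n * of_nat p * (?Q - (1 - 3 * t + 6 * t ^ 2)))"
    by (rule p_multiple_mult[OF p_multiple_mult_left[OF p_integral_power[OF p_integral_neg_1]
          p_multiple_of_nat_p]]) simp
  moreover have "G p (n + 1) = (- 1) ^ n * of_nat p * ?Q"
    unfolding p G_central_eq four[symmetric]
    by (simp add: power_mult field_simps flip: power_mult_distrib)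
  ultimately show ?thesis
    by (simp only: right_diff_distrib)
qed

end

theorem lemma2p4:
  fixes p :: nat
  assumes "prime p" and "p > 3"
  shows "rat_cong (G p ((p + 1) div 2))
           ((-1) ^ ((p - 1) div 2) * of_nat p
             * (1 - 3 * of_nat p * fermat_quot2 p + 6 * of_nat p ^ 2 * fermat_quot2 p ^ 2))
           p 4"
proof -
  interpret prime_gt_3 p
    using assms by unfold_locales
  obtain n where p: "p = 2 * n + 1"
    using odd_p oddE by blast
  define t :: rat where "t = 2 ^ (p - 1) - 1"
  have "of_nat p * fermat_quot2 p = t"
    unfolding fermat_quot2_def t_def using p by simp
  then have q: "3 * of_nat p * fermat_quot2 p = 3 * t" "6 * of_nat p ^ 2 * fermat_quot2 p ^ 2 = 6 * t ^ 2"
    by (simp_all add: mult.assoc flip: power_mult_distrib)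
  have "(p + 1) div 2 = n + 1" "(p - 1) div 2 = n"
    using p by simp_all
  then show ?thesis
    unfolding q using G_half_cong[OF p] unfolding t_def[symmetric] by (simp add: rat_cong_if_p_multiple)
qed

end
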